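(* Let $B$ be a symmetric positive definite $3\times3$ matrix with orthonormal eigenvectors $\mathbf e_1,\mathbf e_2,\mathbf e_3$, and let $\mathbb M=\sum_{i=1}^3\mathbf e_i\mathbf e_i\mathbf e_i\mathbf e_i$ (so $\mathbb M_{abcd}=\sum_i (\mathbf e_i)_a(\mathbf e_i)_b(\mathbf e_i)_c(\mathbf e_i)_d$). Then for every symmetric $3\times3$ matrix $N$, $$\mathbb D(B):(\mathbb M:N)=\mathbb M:(\mathbb D(B):N).$$ Consequently, if $\frac{dA}{dt}=F$, $\frac{dB}{dt}=G$ with $F=-\mathbb C(B):G$ (equivalently $G=-\mathbb D(B):F$), and $0<\kappa\le1$, then replacing $F$ by $F-(1-\kappa)\mathbb M:F$ and $G$ by $G-(1-\kappa)\mathbb M:G$ preserves the relation $\frac{dB}{dt}=-\mathbb D(B):\frac{dA}{dt}$.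
   Context: For a symmetric positive definite matrix $B$, $$\mathbb C(B)=\tfrac34\int_0^\infty\frac{\mathcal S\big((B+sI)^{-1}\otimes(B+sI)^{-1}\big)\,ds}{\sqrt{\det(B+sI)}},$$ where $\mathcal S(\mathbb T)_{ijkl}$ is the average of $\mathbb T_{mnpq}$ over all permutations $(m,n,p,q)$ of $(i,j,k,l)$, and $(\mathbb T:M)_{ij}=\sum_{k,l}\mathbb T_{ijkl}M_{kl}$. The map $M\mapsto\mathbb C(B):M$ on symmetric matrices is invertible, and $\mathbb D(B)$ denotes the rank-4 tensor with $\mathbb D_{ijkl}=\mathbb D_{jikl}=\mathbb D_{ijlk}$ such that $\mathbb C(B):\mathbb D(B):M=\mathbb D(B):\mathbb C(B):M=M$ for all symmetric $M$. *)

theory Defs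
  imports "HOL-Analysis.Analysis" "HOL-Combinatorics.Permutations"
begin

type_synonym mat3 = "real^3^3"
type_synonym tensor4 = "3 \<Rightarrow> 3 \<Rightarrow> 3 \<Rightarrow> 3 \<Rightarrow> real"

definition ddot :: "tensor4 \<Rightarrow> mat3 \<Rightarrow> mat3" (infixr "\<bullet>\<bullet>" 70) where
  "T \<bullet>\<bullet> M = (\<chi> i j. \<Sum>k\<in>UNIV. \<Sum>l\<in>UNIV. T i j k l * M $ k $ l)"

definition tprod :: "mat3 \<Rightarrow> mat3 \<Rightarrow> tensor4" where
  "tprod P Q = (\<lambda>i j k l. P $ i $ j * Q $ k $ l)"

definition symmetrize :: "tensor4 \<Rightarrow> tensor4" where
  "symmetrize T = (\<lambda>i j k l.
     (let idx = (\<lambda>n::nat. [i, j, k, l] ! n) in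
      (\<Sum>p\<in>{p. p permutes {..<4::nat}}. T (idx (p 0)) (idx (p 1)) (idx (p 2)) (idx (p 3))) / 24))"

definition symmetric_mat :: "mat3 \<Rightarrow> bool" where
  "symmetric_mat M \<longleftrightarrow> transpose M = M"

definition spd :: "mat3 \<Rightarrow> bool" where
  "spd B \<longleftrightarrow> symmetric_mat B \<and> (\<forall>x. x \<noteq> 0 \<longrightarrow> x \<bullet> (B *v x) > 0)"

definition CC :: "mat3 \<Rightarrow> tensor4" where
  "CC B = (\<lambda>i j k l. 3/4 * integral {0..}
      (\<lambda>s::real. symmetrize (tprod (matrix_inv (B + s *\<^sub>R mat 1)) (matrix_inv (B + s *\<^sub>R mat 1))) i j k l
                 / sqrt (det (B + s *\<^sub>R mat 1))))"

definition minor_sym :: "tensor4 \<Rightarrow> bool" where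
  "minor_sym D \<longleftrightarrow> (\<forall>i j k l. D i j k l = D j i k l \<and> D i j k l = D i j l k)"

definition DD :: "mat3 \<Rightarrow> tensor4" where
  "DD B = (SOME D. minor_sym D \<and> (\<forall>M. symmetric_mat M \<longrightarrow>
              CC B \<bullet>\<bullet> (D \<bullet>\<bullet> M) = M \<and> D \<bullet>\<bullet> (CC B \<bullet>\<bullet> M) = M))"

definition MM :: "(3 \<Rightarrow> real^3) \<Rightarrow> tensor4" where
  "MM e = (\<lambda>a b c d. \<Sum>i\<in>UNIV. e i $ a * e i $ b * e i $ c * e i $ d)"

end

(*
  In an orthonormal eigenframe e of B the resolvent (B + sI)^-1 is diagonal, so C(B) is a positive
  combination  sum_ij gamma_ij S(e_i e_i e_j e_j)  with
    gamma_ij = 3/4 int_0^oo ds / ((l_i + s) (l_j + s) sqrt det (B + sI)).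
  In frame coordinates C(B) therefore maps diagonal matrices to diagonal ones and off-diagonal
  entries to off-diagonal entries, i.e. it commutes with M, which keeps only the diagonal.
  The matrix (gamma_ij) is positive semidefinite with positive entries, which makes C(B) injective
  on symmetric matrices; hence its inverse D(B) exists and commutes with M as well.
  The statement about the flow rule is then a linear consequence.
*)

theory Submission
  imports Defs
begin

section \<open>Symmetrized tensors and double contraction\<close>

lemma symmetrize_expand:
  "symmetrize T a b c d = (T a b c d + T a b d c + T a c b d + T a c d b + T a d b c + T a d c b
   + T b a c d + T b a d c + T b c a d + T b c d a + T b d a c + T b d c a
   + T c a b d + T c a d b + T c b a d + T c b d a + T c d a b + T c d b a
   + T d a b c + T d a c b + T d b a c + T d b c a + T d c a b + T d c b a) / 24"
proof -
  have "{..<4::nat} = {0, 1, 2, 3}" by auto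
  then show ?thesis
    unfolding symmetrize_def Let_def
    by (simp add: sum_over_permutations_insert Transposition.transpose_def algebra_simps)
qed

lemma minor_sym_symmetrize: "minor_sym (symmetrize T)"
  unfolding minor_sym_def symmetrize_expand by (simp add: add_ac)

lemma minor_sym_CC: "minor_sym (CC B)"
  unfolding minor_sym_def
proof (intro allI conjI)
  fix i j k l
  have "symmetrize X i j k l = symmetrize X j i k l" "symmetrize X i j k l = symmetrize X i j l k"
    for X using minor_sym_symmetrize unfolding minor_sym_def by blast+
  then show "CC B i j k l = CC B j i k l" "CC B i j k l = CC B i j l k"
    unfolding CC_def by simp_all
qed

lemma minor_sym_MM: "minor_sym (MM e)"
  unfolding minor_sym_def MM_def by (simp add: mult_ac)

lemma ddot_add: "T \<bullet>\<bullet> (X + Y) = T \<bullet>\<bullet> X + T \<bullet>\<bullet> Y"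
  by (simp add: vec_eq_iff ddot_def algebra_simps sum.distrib)

lemma ddot_scaleR: "T \<bullet>\<bullet> (c *\<^sub>R X) = c *\<^sub>R (T \<bullet>\<bullet> X)"
  by (simp add: vec_eq_iff ddot_def sum_distrib_left algebra_simps)

lemma linear_ddot: "linear (\<lambda>X. T \<bullet>\<bullet> X)"
  by (rule linearI) (simp_all add: ddot_add ddot_scaleR)

lemma ddot_diff: "T \<bullet>\<bullet> (X - Y) = T \<bullet>\<bullet> X - T \<bullet>\<bullet> Y"
  using linear_diff[OF linear_ddot] .

lemma ddot_minus: "T \<bullet>\<bullet> (- X) = - (T \<bullet>\<bullet> X)"
  using linear_neg[OF linear_ddot] .

lemma symmetric_mat_ddot: "minor_sym T \<Longrightarrow> symmetric_mat (T \<bullet>\<bullet> X)"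
  by (simp add: minor_sym_def symmetric_mat_def ddot_def vec_eq_iff transpose_def)

lemma symmetrize_sum:
  "symmetrize (\<lambda>a b c d. \<Sum>k\<in>A. f k a b c d) = (\<lambda>a b c d. \<Sum>k\<in>A. symmetrize (f k) a b c d)"
  unfolding symmetrize_def Let_def
  by (simp add: sum_divide_distrib[symmetric]; intro ext; subst sum.swap; simp)

lemma symmetrize_scale:
  "symmetrize (\<lambda>a b c d. k * f a b c d) = (\<lambda>a b c d. k * symmetrize f a b c d)"
  unfolding symmetrize_def Let_def by (simp add: sum_distrib_left)

lemma ddot_tensor_sum: "(\<lambda>a b c d. \<Sum>k\<in>A. f k a b c d) \<bullet>\<bullet> N = (\<Sum>k\<in>A. f k \<bullet>\<bullet> N)"
proof -
  have "(\<Sum>c\<in>UNIV. \<Sum>d\<in>UNIV. (\<Sum>k\<in>A. f k a b c d) * N $ c $ d) =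
        (\<Sum>k\<in>A. \<Sum>c\<in>UNIV. \<Sum>d\<in>UNIV. f k a b c d * N $ c $ d)" for a b
    by (simp add: sum_distrib_right sum.swap[of _ A])
  then show ?thesis by (simp add: vec_eq_iff ddot_def sum_component)
qed

lemma ddot_tensor_scale: "(\<lambda>a b c d. k * f a b c d) \<bullet>\<bullet> N = k *\<^sub>R (f \<bullet>\<bullet> N)"
  by (simp add: vec_eq_iff ddot_def sum_distrib_left algebra_simps)

definition outer :: "real^3 \<Rightarrow> real^3 \<Rightarrow> mat3" where
  "outer u v = (\<chi> a b. u $ a * v $ b)"

lemma symmetrize_tprod_outer:
  "symmetrize (tprod (outer u u) (outer v v)) a b c d =
    (u$a * u$b * v$c * v$d + v$a * v$b * u$c * u$d + u$a * u$c * v$b * v$d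
     + v$a * v$c * u$b * u$d + u$a * u$d * v$b * v$c + v$a * v$d * u$b * u$c) / 6"
  unfolding symmetrize_expand tprod_def outer_def by (simp add: field_simps)

lemma symmetrize_tprod_outer_ddot:
  "symmetrize (tprod (outer u u) (outer v v)) \<bullet>\<bullet> N =
    (1/6) *\<^sub>R ((v \<bullet> (N *v v)) *\<^sub>R outer u u + (u \<bullet> (N *v u)) *\<^sub>R outer v v
      + (u \<bullet> (N *v v) + v \<bullet> (N *v u)) *\<^sub>R (outer u v + outer v u))"
  unfolding vec_eq_iff ddot_def symmetrize_tprod_outer
  by (simp add: outer_def sum_3 inner_vec_def matrix_vector_mult_def field_simps)

section \<open>Inverting a tensor on symmetric matrices\<close>

lemma transpose_add: "transpose (A + B) = transpose A + transpose (B :: 'a::semiring_1^'n^'m)"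
  by (simp add: vec_eq_iff transpose_def)

definition sym_part :: "mat3 \<Rightarrow> mat3" where
  "sym_part X = (1/2) *\<^sub>R (X + transpose X)"

definition skew_part :: "mat3 \<Rightarrow> mat3" where
  "skew_part X = (1/2) *\<^sub>R (X - transpose X)"

lemma sym_part_plus_skew_part: "sym_part X + skew_part X = X"
  by (simp add: sym_part_def skew_part_def vec_eq_iff field_simps)

lemma symmetric_sym_part: "symmetric_mat (sym_part X)"
  by (simp add: symmetric_mat_def sym_part_def vec_eq_iff transpose_def)

lemma transpose_skew_part: "transpose (skew_part X) = - skew_part X"
  by (simp add: skew_part_def vec_eq_iff transpose_def field_simps)

lemma sym_part_symmetric: "symmetric_mat X \<Longrightarrow> sym_part X = X"
  by (simp add: symmetric_mat_def sym_part_def vec_eq_iff transpose_def)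

lemma skew_part_symmetric: "symmetric_mat X \<Longrightarrow> skew_part X = 0"
  by (simp add: symmetric_mat_def skew_part_def vec_eq_iff transpose_def)

lemma linear_sym_part: "linear sym_part"
  by (rule linearI) (simp_all add: sym_part_def vec_eq_iff transpose_def algebra_simps)

lemma linear_skew_part: "linear skew_part"
  by (rule linearI) (simp_all add: skew_part_def vec_eq_iff transpose_def algebra_simps)

definition matrix_unit :: "3 \<Rightarrow> 3 \<Rightarrow> mat3" where
  "matrix_unit c d = (\<chi> x y. if x = c \<and> y = d then 1 else 0)"

lemma matrix_unit_expansion: "(\<Sum>c\<in>UNIV. \<Sum>d\<in>UNIV. M $ c $ d *\<^sub>R matrix_unit c d) = M"
  by (simp add: vec_eq_iff forall_3 sum_3 matrix_unit_def)

definition tensor_of :: "(mat3 \<Rightarrow> mat3) \<Rightarrow> tensor4" where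
  "tensor_of f = (\<lambda>a b c d. f (matrix_unit c d) $ a $ b)"

lemma ddot_tensor_of:
  assumes "linear f"
  shows "tensor_of f \<bullet>\<bullet> M = f M"
proof -
  have "f M = (\<Sum>c\<in>UNIV. \<Sum>d\<in>UNIV. M $ c $ d *\<^sub>R f (matrix_unit c d))"
    by (subst matrix_unit_expansion[symmetric, of M])
       (simp add: linear_sum[OF assms] linear_scale[OF assms] o_def)
  then show ?thesis
    by (simp add: vec_eq_iff ddot_def tensor_of_def sum_component mult.commute)
qed

lemma minor_sym_tensor_of:
  assumes "\<And>X. symmetric_mat (f X)" and "\<And>c d. f (matrix_unit c d) = f (matrix_unit d c)"
  shows "minor_sym (tensor_of f)"
  unfolding minor_sym_def tensor_of_def
proof (intro allI conjI)
  fix a b c d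
  have "transpose (f (matrix_unit c d)) $ b $ a = f (matrix_unit c d) $ a $ b"
    by (simp add: transpose_def)
  then show "f (matrix_unit c d) $ a $ b = f (matrix_unit c d) $ b $ a"
    using assms(1) by (simp add: symmetric_mat_def)
  show "f (matrix_unit c d) $ a $ b = f (matrix_unit d c) $ a $ b"
    by (simp only: assms(2)[of c d])
qed

lemma sym_part_matrix_unit_swap: "sym_part (matrix_unit c d) = sym_part (matrix_unit d c)"
  by (simp add: sym_part_def matrix_unit_def vec_eq_iff transpose_def conj_commute add.commute)

lemma exists_inverse_on_symmetric:
  assumes T: "minor_sym T"
    and inj: "\<And>X. symmetric_mat X \<Longrightarrow> T \<bullet>\<bullet> X = 0 \<Longrightarrow> X = 0"
  shows "\<exists>D. minor_sym D \<and>
           (\<forall>M. symmetric_mat M \<longrightarrow> T \<bullet>\<bullet> (D \<bullet>\<bullet> M) = M \<and> D \<bullet>\<bullet> (T \<bullet>\<bullet> M) = M)"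
proof -
  \<comment> \<open>\<open>L\<close> agrees with \<open>T\<close> on symmetric and with the identity on skew matrices, so it is an
      injective, hence bijective, endomorphism of all matrices.\<close>
  define L where "L X = T \<bullet>\<bullet> sym_part X + skew_part X" for X
  have "linear L"
    unfolding L_def
    by (intro linear_compose_add linear_compose[OF linear_sym_part linear_ddot, unfolded o_def] linear_skew_part)
  have L_symmetric: "T \<bullet>\<bullet> sym_part X = M" "skew_part X = 0"
    if "L X = M" "symmetric_mat M" for X M
  proof -
    have "T \<bullet>\<bullet> sym_part X - skew_part X = transpose (L X)"
      using symmetric_mat_ddot[OF T, of "sym_part X"]
      by (simp add: L_def symmetric_mat_def transpose_add transpose_skew_part)
    also have "\<dots> = L X"
      using that by (simp add: symmetric_mat_def)
    finally show "skew_part X = 0"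
      by (simp add: L_def vec_eq_iff)
    with that(1) show "T \<bullet>\<bullet> sym_part X = M"
      by (simp add: L_def)
  qed
  have "inj L"
    unfolding linear_inj_iff_eq_0[OF \<open>linear L\<close>]
  proof (intro allI impI)
    fix X assume "L X = 0"
    then have "T \<bullet>\<bullet> sym_part X = 0" "skew_part X = 0"
      using L_symmetric[of X 0] by (auto simp: symmetric_mat_def vec_eq_iff transpose_def)
    then show "X = 0"
      using inj[OF symmetric_sym_part, of X] sym_part_plus_skew_part[of X] by simp
  qed
  then obtain L' where "linear L'" and L'L: "\<And>X. L' (L X) = X" and LL': "\<And>X. L (L' X) = X"
    using linear_injective_isomorphism[OF \<open>linear L\<close> \<open>inj L\<close>] by blast
  define D where "D = tensor_of (sym_part \<circ> L' \<circ> sym_part)"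
  have D_ddot: "D \<bullet>\<bullet> M = sym_part (L' (sym_part M))" for M
    unfolding D_def
    using ddot_tensor_of[OF linear_compose[OF linear_sym_part
          linear_compose[OF \<open>linear L'\<close> linear_sym_part]]]
    by simp
  have "minor_sym D"
    unfolding D_def
    by (rule minor_sym_tensor_of) (simp_all add: symmetric_sym_part sym_part_matrix_unit_swap)
  moreover have "T \<bullet>\<bullet> (D \<bullet>\<bullet> M) = M \<and> D \<bullet>\<bullet> (T \<bullet>\<bullet> M) = M" if M: "symmetric_mat M" for M
  proof
    show "T \<bullet>\<bullet> (D \<bullet>\<bullet> M) = M"
      using L_symmetric(1)[OF LL' M] by (simp add: D_ddot sym_part_symmetric[OF M])
    have "T \<bullet>\<bullet> M = L M"
      by (simp add: L_def sym_part_symmetric[OF M] skew_part_symmetric[OF M])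
    then show "D \<bullet>\<bullet> (T \<bullet>\<bullet> M) = M"
      using symmetric_mat_ddot[OF T, of M]
      by (simp add: D_ddot sym_part_symmetric L'L M)
  qed
  ultimately show ?thesis by blast
qed

lemma DD_inverse:
  assumes "\<And>X. symmetric_mat X \<Longrightarrow> CC B \<bullet>\<bullet> X = 0 \<Longrightarrow> X = 0"
  shows "minor_sym (DD B) \<and> (\<forall>M. symmetric_mat M \<longrightarrow>
           CC B \<bullet>\<bullet> (DD B \<bullet>\<bullet> M) = M \<and> DD B \<bullet>\<bullet> (CC B \<bullet>\<bullet> M) = M)"
  unfolding DD_def by (rule someI_ex[OF exists_inverse_on_symmetric[OF minor_sym_CC assms]])

lemma ddot_commute_with_inverse:
  assumes D: "minor_sym D"
    and inverse: "\<And>M. symmetric_mat M \<Longrightarrow> T \<bullet>\<bullet> (D \<bullet>\<bullet> M) = M \<and> D \<bullet>\<bullet> (T \<bullet>\<bullet> M) = M"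
    and P: "minor_sym P"
    and commute: "\<And>M. symmetric_mat M \<Longrightarrow> T \<bullet>\<bullet> (P \<bullet>\<bullet> M) = P \<bullet>\<bullet> (T \<bullet>\<bullet> M)"
    and N: "symmetric_mat N"
  shows "D \<bullet>\<bullet> (P \<bullet>\<bullet> N) = P \<bullet>\<bullet> (D \<bullet>\<bullet> N)"
proof -
  have DN: "symmetric_mat (D \<bullet>\<bullet> N)" and PDN: "symmetric_mat (P \<bullet>\<bullet> (D \<bullet>\<bullet> N))"
    using symmetric_mat_ddot D P by blast+
  have "D \<bullet>\<bullet> (P \<bullet>\<bullet> N) = D \<bullet>\<bullet> (P \<bullet>\<bullet> (T \<bullet>\<bullet> (D \<bullet>\<bullet> N)))"
    using inverse[OF N] by simp
  also have "\<dots> = D \<bullet>\<bullet> (T \<bullet>\<bullet> (P \<bullet>\<bullet> (D \<bullet>\<bullet> N)))"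
    by (simp add: commute[OF DN])
  also have "\<dots> = P \<bullet>\<bullet> (D \<bullet>\<bullet> N)"
    using inverse[OF PDN] by simp
  finally show ?thesis .
qed

section \<open>Coordinates in an orthonormal frame\<close>

definition frame_matrix :: "(3 \<Rightarrow> real^3) \<Rightarrow> mat3" where
  "frame_matrix e = (\<chi> i. e i)"

locale orthonormal_frame =
  fixes e :: "3 \<Rightarrow> real^3"
  assumes orthonormal: "\<And>i j. e i \<bullet> e j = (if i = j then 1 else 0)"
begin

abbreviation "Q \<equiv> frame_matrix e"

lemma frame_matrix_orthogonal: "Q ** transpose Q = mat 1" "transpose Q ** Q = mat 1"
proof -
  show "Q ** transpose Q = mat 1"
    using orthonormal
    by (simp add: vec_eq_iff matrix_matrix_mult_def transpose_def mat_def frame_matrix_def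
        inner_vec_def)
  then show "transpose Q ** Q = mat 1"
    using matrix_left_right_inverse by blast
qed

lemma frame_matrix_cancel: "transpose Q ** (Q ** X) = X" "Q ** (transpose Q ** X) = X"
  by (simp_all add: matrix_mul_assoc frame_matrix_orthogonal)

definition coord :: "mat3 \<Rightarrow> 3 \<Rightarrow> 3 \<Rightarrow> real" where
  "coord X a b = e a \<bullet> (X *v e b)"

lemma coord_conv_conj: "coord X a b = (Q ** X ** transpose Q) $ a $ b"
  by (simp add: coord_def matrix_matrix_mult_def transpose_def frame_matrix_def inner_vec_def
      matrix_vector_mult_def sum_3 algebra_simps)

lemma matrix_eq_coordI:
  assumes "\<And>a b. coord X a b = coord Y a b"
  shows "X = Y"
proof -
  have "Q ** X ** transpose Q = Q ** Y ** transpose Q"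
    using assms by (simp add: vec_eq_iff coord_conv_conj)
  then have "transpose Q ** (Q ** X ** transpose Q) ** Q = transpose Q ** (Q ** Y ** transpose Q) ** Q"
    by simp
  then show ?thesis
    by (simp add: frame_matrix_orthogonal frame_matrix_cancel flip: matrix_mul_assoc)
qed

lemma coord_add: "coord (X + Y) a b = coord X a b + coord Y a b"
  by (simp add: coord_def matrix_vector_mult_def inner_vec_def sum_3 algebra_simps)

lemma coord_scaleR: "coord (c *\<^sub>R X) a b = c * coord X a b"
  by (simp add: coord_def matrix_vector_mult_def inner_vec_def sum_3 algebra_simps)

lemma coord_zero: "coord 0 a b = 0"
  by (simp add: coord_def)

lemma coord_sum: "coord (\<Sum>i\<in>A. X i) a b = (\<Sum>i\<in>A. coord (X i) a b)"
  by (induction A rule: infinite_finite_induct) (auto simp: coord_zero coord_add)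

lemma coord_transpose: "coord (transpose X) a b = coord X b a"
  by (simp add: coord_def matrix_vector_mult_def inner_vec_def sum_3 transpose_def algebra_simps)

lemma coord_outer: "coord (outer u v) a b = (e a \<bullet> u) * (v \<bullet> e b)"
  by (simp add: coord_def outer_def matrix_vector_mult_def inner_vec_def sum_3 algebra_simps)

lemma coord_outer_frame: "coord (outer (e i) (e j)) a b = (if a = i \<and> b = j then 1 else 0)"
  by (simp add: coord_outer orthonormal inner_commute)

lemma coord_mult: "coord (X ** Y) a b = (\<Sum>k\<in>UNIV. coord X a k * coord Y k b)"
proof -
  have "Q ** (X ** Y) ** transpose Q = (Q ** X ** transpose Q) ** (Q ** Y ** transpose Q)"
    by (simp add: frame_matrix_cancel flip: matrix_mul_assoc)
  then show ?thesis by (simp add: coord_conv_conj matrix_matrix_mult_def)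
qed

lemma symmetric_mat_iff_coord: "symmetric_mat X \<longleftrightarrow> (\<forall>a b. coord X a b = coord X b a)"
  unfolding symmetric_mat_def
  by (metis coord_transpose matrix_eq_coordI)

definition frame_diag :: "(3 \<Rightarrow> real) \<Rightarrow> mat3" where
  "frame_diag c = (\<Sum>i\<in>UNIV. c i *\<^sub>R outer (e i) (e i))"

lemma coord_frame_diag: "coord (frame_diag c) a b = (if a = b then c a else 0)"
  unfolding frame_diag_def coord_sum coord_scaleR coord_outer_frame
  using exhaust_3[of a] exhaust_3[of b] by (auto simp: sum_3)

lemma frame_diag_mult: "frame_diag c ** frame_diag d = frame_diag (\<lambda>i. c i * d i)"
  by (rule matrix_eq_coordI) (use exhaust_3 in \<open>auto simp: coord_mult coord_frame_diag sum_3\<close>)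

lemma frame_diag_one: "frame_diag (\<lambda>i. 1) = mat 1"
  by (rule matrix_eq_coordI) (simp add: coord_frame_diag coord_def[of "mat 1"] orthonormal)

lemma frame_diag_add: "frame_diag c + frame_diag d = frame_diag (\<lambda>i. c i + d i)"
  by (rule matrix_eq_coordI) (simp add: coord_frame_diag coord_add)

lemma frame_diag_scaleR: "k *\<^sub>R frame_diag c = frame_diag (\<lambda>i. k * c i)"
  by (rule matrix_eq_coordI) (simp add: coord_frame_diag coord_scaleR)

lemma frame_diag_entry: "frame_diag c $ x $ y = (\<Sum>i\<in>UNIV. c i * (e i $ x * e i $ y))"
  by (simp add: frame_diag_def outer_def sum_component)

lemma det_frame_diag: "det (frame_diag c) = (\<Prod>i\<in>UNIV. c i)"
proof -
  define \<Lambda> :: mat3 where "\<Lambda> = (\<chi> i j. if i = j then c i else 0)"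
  have "frame_diag c = transpose Q ** \<Lambda> ** Q"
  proof (rule matrix_eq_coordI)
    fix a b
    have conj: "Q ** (transpose Q ** \<Lambda> ** Q) ** transpose Q = \<Lambda>"
      by (simp add: frame_matrix_orthogonal frame_matrix_cancel flip: matrix_mul_assoc)
    show "coord (frame_diag c) a b = coord (transpose Q ** \<Lambda> ** Q) a b"
      unfolding coord_frame_diag coord_conv_conj[of "transpose Q ** \<Lambda> ** Q"] conj
      by (simp add: \<Lambda>_def)
  qed
  moreover have "det Q * det (transpose Q) = 1"
    by (metis frame_matrix_orthogonal(1) det_I det_mul)
  moreover have "det \<Lambda> = (\<Prod>i\<in>UNIV. c i)"
    by (subst det_diagonal) (simp_all add: \<Lambda>_def)
  ultimately show ?thesis
    by (simp add: det_mul det_transpose algebra_simps)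
qed

lemma matrix_inv_frame_diag:
  assumes "\<And>i. c i * d i = 1"
  shows "matrix_inv (frame_diag c) = frame_diag d"
proof -
  have cd: "frame_diag c ** frame_diag d = mat 1" and dc: "frame_diag d ** frame_diag c = mat 1"
    using assms by (simp_all add: frame_diag_mult mult.commute flip: frame_diag_one)
  show ?thesis
    unfolding matrix_inv_def
  proof (rule some_equality)
    fix A assume A: "frame_diag c ** A = mat 1 \<and> A ** frame_diag c = mat 1"
    have "A = A ** (frame_diag c ** frame_diag d)"
      by (simp add: cd)
    also have "\<dots> = frame_diag d"
      using A by (simp add: matrix_mul_assoc)
    finally show "A = frame_diag d" .
  qed (use cd dc in simp)
qed

lemma symmetrize_tprod_frame_diag:
  "symmetrize (tprod (frame_diag f) (frame_diag f)) a b c d =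
     (\<Sum>i\<in>UNIV. \<Sum>j\<in>UNIV. f i * f j * symmetrize (tprod (outer (e i) (e i)) (outer (e j) (e j))) a b c d)"
proof -
  have "tprod (frame_diag f) (frame_diag f) = (\<lambda>a b c d. \<Sum>i\<in>UNIV. \<Sum>j\<in>UNIV.
      f i * f j * tprod (outer (e i) (e i)) (outer (e j) (e j)) a b c d)"
    by (simp add: tprod_def frame_diag_entry outer_def sum_product fun_eq_iff algebra_simps)
  then show ?thesis
    by (simp add: symmetrize_sum symmetrize_scale)
qed

lemma MM_ddot: "MM e \<bullet>\<bullet> Z = frame_diag (\<lambda>i. coord Z i i)"
  by (simp add: vec_eq_iff ddot_def MM_def frame_diag_entry coord_def inner_vec_def
      matrix_vector_mult_def sum_3 algebra_simps)

lemma coord_MM: "coord (MM e \<bullet>\<bullet> Z) a b = (if a = b then coord Z a a else 0)"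
  by (simp add: MM_ddot coord_frame_diag)

end

section \<open>The tensor C(B) in an eigenframe of B\<close>

locale eigenframe = orthonormal_frame +
  fixes B :: mat3 and lam :: "3 \<Rightarrow> real"
  assumes eigenvector: "\<And>i. B *v e i = lam i *\<^sub>R e i"
    and eigenvalue_pos: "\<And>i. 0 < lam i"
begin

lemma shifted_eigenvalue_pos: "0 \<le> s \<Longrightarrow> 0 < lam i + s"
  using eigenvalue_pos[of i] by linarith

lemma shifted_eq_frame_diag: "B + s *\<^sub>R mat 1 = frame_diag (\<lambda>i. lam i + s)"
proof -
  have "B = frame_diag lam"
    by (rule matrix_eq_coordI) (simp add: coord_frame_diag coord_def[of B] eigenvector orthonormal)
  then show ?thesis
    by (simp add: frame_diag_scaleR frame_diag_add flip: frame_diag_one)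
qed

lemma matrix_inv_shifted:
  "0 \<le> s \<Longrightarrow> matrix_inv (B + s *\<^sub>R mat 1) = frame_diag (\<lambda>i. 1 / (lam i + s))"
  unfolding shifted_eq_frame_diag
  by (rule matrix_inv_frame_diag) (simp add: shifted_eigenvalue_pos less_imp_neq[symmetric])

lemma det_shifted: "det (B + s *\<^sub>R mat 1) = (\<Prod>k\<in>UNIV. lam k + s)"
  unfolding shifted_eq_frame_diag det_frame_diag ..

lemma prod_shifted_pos: "0 \<le> s \<Longrightarrow> 0 < (\<Prod>k\<in>UNIV. lam k + s)"
  by (simp add: prod_pos shifted_eigenvalue_pos)

text \<open>With \<open>(B + s I)\<^sup>-\<^sup>1 = frame_diag (\<lambda>i. 1 / (lam i + s))\<close>, the integrand defining \<open>CC B\<close> is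
  \<open>\<Sum>i j. weight i j s \<cdot> S(e\<^sub>i e\<^sub>i e\<^sub>j e\<^sub>j)\<close>.\<close>

definition weight :: "3 \<Rightarrow> 3 \<Rightarrow> real \<Rightarrow> real" where
  "weight i j s = 1 / ((lam i + s) * (lam j + s) * sqrt (\<Prod>k\<in>UNIV. lam k + s))"

lemma weight_nonneg: "0 \<le> s \<Longrightarrow> 0 \<le> weight i j s"
  by (simp add: weight_def shifted_eigenvalue_pos prod_shifted_pos less_imp_le)

lemma weight_antimono:
  assumes "0 \<le> s" "s \<le> t"
  shows "weight i j t \<le> weight i j s"
proof -
  have "(\<Prod>k\<in>UNIV. lam k + s) \<le> (\<Prod>k\<in>UNIV. lam k + t)"
    by (rule prod_mono) (use assms shifted_eigenvalue_pos[of s] in \<open>auto simp: less_imp_le\<close>)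
  moreover have "(lam i + s) * (lam j + s) \<le> (lam i + t) * (lam j + t)"
    using assms shifted_eigenvalue_pos[of s i] shifted_eigenvalue_pos[of s j] by (intro mult_mono) auto
  ultimately show ?thesis
    unfolding weight_def
    using assms shifted_eigenvalue_pos[of s i] shifted_eigenvalue_pos[of s j] prod_shifted_pos[of s]
    by (intro divide_left_mono mult_mono mult_pos_pos) auto
qed

lemma continuous_on_weight: "continuous_on {0..} (weight i j)"
  unfolding weight_def
  by (intro continuous_intros)
     (use shifted_eigenvalue_pos prod_shifted_pos in \<open>fastforce simp: less_imp_neq[symmetric]\<close>)+

lemma weight_integrable: "weight i j integrable_on {0..}"
proof -
  define r where "r = sqrt (\<Prod>k\<in>UNIV. lam k)"
  have r: "0 < r"
    unfolding r_def using prod_shifted_pos[of 0] by simp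
  define K where "K = max (weight i j 0) (1 / r)"
  define h where "h s = (if s \<le> 1 then K else K / s\<^sup>2)" for s :: real
  have "h integrable_on {0..1}"
    by (rule integrable_eq[of "\<lambda>_. K"]) (auto simp: h_def)
  moreover have "h integrable_on {1..}"
  proof -
    have "(\<lambda>s. 1 / s\<^sup>2) integrable_on {1::real..}"
      using has_integral_inverse_power_to_inf[of 2 1] by (auto simp: integrable_on_def)
    then have "(\<lambda>s. K * (1 / s\<^sup>2)) integrable_on {1::real..}"
      by (rule integrable_on_mult_right)
    then show ?thesis
      by (rule integrable_eq) (auto simp: h_def)
  qed
  moreover have "negligible ({0..1::real} \<inter> {1..})"
    by (rule negligible_subset[of "{1}"]) auto
  ultimately have h: "h integrable_on {0..}"
    by (rule integrable_Un'[where A = "{0..1}" and B = "{1..}"]) auto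
  have bound: "\<bar>weight i j s\<bar> \<le> h s" if "s \<in> {0..}" for s
  proof (cases "s \<le> 1")
    case True
    then show ?thesis
      using that weight_nonneg[of s i j] weight_antimono[of 0 s i j] by (simp add: h_def K_def)
  next
    case False
    have "r \<le> sqrt (\<Prod>k\<in>UNIV. lam k + s)"
      unfolding r_def using False eigenvalue_pos
      by (simp add: less_imp_le prod_mono)
    then have "s * s * r \<le> (lam i + s) * (lam j + s) * sqrt (\<Prod>k\<in>UNIV. lam k + s)"
      using eigenvalue_pos[of i] eigenvalue_pos[of j] r False
      by (intro mult_mono) (auto intro!: mult_mono simp: less_imp_le)
    then have "weight i j s \<le> 1 / (s * s * r)"
      unfolding weight_def using False r by (intro frac_le) auto
    also have "\<dots> = 1 / r / s\<^sup>2"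
      by (simp add: power2_eq_square ac_simps)
    also have "\<dots> \<le> K / s\<^sup>2"
      by (rule divide_right_mono) (simp_all add: K_def)
    finally show ?thesis
      using False weight_nonneg[of s i j] by (simp add: h_def)
  qed
  have lebesgue: "{0::real..} \<in> sets lebesgue"
    using lebesgue_closedin[of UNIV "{0::real..}"] by simp
  show ?thesis
    by (rule measurable_bounded_by_integrable_imp_integrable_real[OF
          continuous_imp_measurable_on_sets_lebesgue[OF continuous_on_weight lebesgue] h bound lebesgue])
qed

lemma integral_weight_pos: "0 < integral {0..} (weight i j)"
proof -
  have on_unit: "weight i j integrable_on {0..1}"
    by (rule integrable_continuous_interval) (rule continuous_on_subset[OF continuous_on_weight], auto)
  have "0 < weight i j 1"
    unfolding weight_def using shifted_eigenvalue_pos[of 1] prod_shifted_pos[of 1] by simp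
  also have "\<dots> = integral {0..1} (\<lambda>_::real. weight i j 1)"
    by (subst integral_const_real) simp
  also have "\<dots> \<le> integral {0..1} (weight i j)"
    by (rule integral_le[OF _ on_unit]) (auto intro: weight_antimono)
  also have "\<dots> \<le> integral {0..} (weight i j)"
    by (rule integral_subset_le[OF _ on_unit weight_integrable]) (auto intro: weight_nonneg)
  finally show ?thesis .
qed

definition CC_coeff :: "3 \<Rightarrow> 3 \<Rightarrow> real" where
  "CC_coeff i j = 3/4 * integral {0..} (weight i j)"

lemma CC_coeff_commute: "CC_coeff i j = CC_coeff j i"
  unfolding CC_coeff_def weight_def by (simp add: ac_simps)

lemma CC_coeff_pos: "0 < CC_coeff i j"
  using integral_weight_pos by (simp add: CC_coeff_def)

lemma CC_eq_sum:
  "CC B = (\<lambda>a b c d. \<Sum>i\<in>UNIV. \<Sum>j\<in>UNIV.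
     CC_coeff i j * symmetrize (tprod (outer (e i) (e i)) (outer (e j) (e j))) a b c d)"
proof (intro ext)
  fix a b c d
  let ?S = "\<lambda>i j. symmetrize (tprod (outer (e i) (e i)) (outer (e j) (e j))) a b c d"
  have "symmetrize (tprod (matrix_inv (B + s *\<^sub>R mat 1)) (matrix_inv (B + s *\<^sub>R mat 1))) a b c d
          / sqrt (det (B + s *\<^sub>R mat 1)) = (\<Sum>i\<in>UNIV. \<Sum>j\<in>UNIV. ?S i j * weight i j s)"
    if "0 \<le> s" for s
    unfolding matrix_inv_shifted[OF that] det_shifted symmetrize_tprod_frame_diag weight_def
    by (simp add: sum_divide_distrib)
  then have "CC B a b c d = 3/4 * integral {0..} (\<lambda>s. \<Sum>i\<in>UNIV. \<Sum>j\<in>UNIV. ?S i j * weight i j s)"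
    unfolding CC_def by (intro arg_cong[where f = "\<lambda>z. 3/4 * z"] integral_cong) simp
  also have "\<dots> = 3/4 * (\<Sum>i\<in>UNIV. \<Sum>j\<in>UNIV. ?S i j * integral {0..} (weight i j))"
    by (simp add: integral_sum integrable_sum integrable_on_mult_right weight_integrable)
  finally show "CC B a b c d = (\<Sum>i\<in>UNIV. \<Sum>j\<in>UNIV. CC_coeff i j * ?S i j)"
    by (simp add: CC_coeff_def sum_distrib_left algebra_simps)
qed

lemma coord_CC_sum: "coord (CC B \<bullet>\<bullet> N) a b = (\<Sum>i\<in>UNIV. \<Sum>j\<in>UNIV. CC_coeff i j *
    (coord N j j * (if a = i \<and> b = i then 1 else 0) + coord N i i * (if a = j \<and> b = j then 1 else 0)
     + (coord N i j + coord N j i) * ((if a = i \<and> b = j then 1 else 0) + (if a = j \<and> b = i then 1 else 0)))) / 6"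
  unfolding CC_eq_sum ddot_tensor_sum ddot_tensor_scale coord_sum coord_scaleR
    symmetrize_tprod_outer_ddot coord_add coord_outer_frame
  by (simp add: coord_def sum_divide_distrib)

lemma coord_CC: "coord (CC B \<bullet>\<bullet> N) a b =
  (if a = b then (\<Sum>j\<in>UNIV. CC_coeff a j * coord N j j) / 3 + 2/3 * CC_coeff a a * coord N a a
   else CC_coeff a b * (coord N a b + coord N b a) / 3)"
  unfolding coord_CC_sum
  using exhaust_3[of a] exhaust_3[of b] CC_coeff_commute
  by (elim disjE) (simp_all add: sum_3)

lemma CC_MM_commute: "CC B \<bullet>\<bullet> (MM e \<bullet>\<bullet> N) = MM e \<bullet>\<bullet> (CC B \<bullet>\<bullet> N)"
  by (rule matrix_eq_coordI) (simp add: coord_CC coord_MM)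

lemma CC_coeff_nonneg_quadratic: "0 \<le> (\<Sum>a\<in>UNIV. \<Sum>b\<in>UNIV. x a * x b * CC_coeff a b)"
proof -
  have integrable: "(\<lambda>s. x a * x b * weight a b s) integrable_on {0..}" for a b
    by (rule integrable_on_mult_right) (rule weight_integrable)
  have "integral {0..} (\<lambda>s. \<Sum>a\<in>UNIV. \<Sum>b\<in>UNIV. x a * x b * weight a b s)
      = (\<Sum>a\<in>UNIV. integral {0..} (\<lambda>s. \<Sum>b\<in>UNIV. x a * x b * weight a b s))"
    by (rule integral_sum) (auto intro: integrable_sum integrable)
  also have "\<dots> = (\<Sum>a\<in>UNIV. \<Sum>b\<in>UNIV. integral {0..} (\<lambda>s. x a * x b * weight a b s))"
    by (intro sum.cong refl integral_sum) (auto intro: integrable)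
  also have "\<dots> = (\<Sum>a\<in>UNIV. \<Sum>b\<in>UNIV. x a * x b * integral {0..} (weight a b))"
    by (simp only: integral_mult_right)
  finally have "(\<Sum>a\<in>UNIV. \<Sum>b\<in>UNIV. x a * x b * CC_coeff a b) =
      3/4 * integral {0..} (\<lambda>s. \<Sum>a\<in>UNIV. \<Sum>b\<in>UNIV. x a * x b * weight a b s)"
    by (simp only: CC_coeff_def sum_distrib_left mult.assoc mult.left_commute[of "3/4"])
  moreover have "0 \<le> (\<Sum>a\<in>UNIV. \<Sum>b\<in>UNIV. x a * x b * weight a b s)" if "s \<in> {0..}" for s
  proof -
    have "(\<Sum>a\<in>UNIV. \<Sum>b\<in>UNIV. x a * x b * weight a b s) =
        (\<Sum>a\<in>UNIV. x a / (lam a + s))\<^sup>2 / sqrt (\<Prod>k\<in>UNIV. lam k + s)"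
      by (simp add: weight_def power2_eq_square sum_product sum_divide_distrib)
    then show ?thesis
      using prod_shifted_pos[of s] that by simp
  qed
  then have "0 \<le> integral {0..} (\<lambda>s. \<Sum>a\<in>UNIV. \<Sum>b\<in>UNIV. x a * x b * weight a b s)"
    by (intro integral_nonneg integrable_sum integrable) auto
  ultimately show ?thesis
    by simp
qed

lemma CC_injective:
  assumes N: "symmetric_mat N" and zero: "CC B \<bullet>\<bullet> N = 0"
  shows "N = 0"
proof (rule matrix_eq_coordI)
  have zero_coord: "coord (CC B \<bullet>\<bullet> N) a b = 0" for a b
    using zero by (simp add: coord_zero)
  have N_coord: "coord N a b = coord N b a" for a b
    using N symmetric_mat_iff_coord by blast
  define x where "x a = coord N a a" for a
  have "(\<Sum>b\<in>UNIV. CC_coeff a b * x b) + 2 * CC_coeff a a * x a = 0" for a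
    using zero_coord[of a a] by (simp add: coord_CC x_def)
  then have "(\<Sum>a\<in>UNIV. x a * ((\<Sum>b\<in>UNIV. CC_coeff a b * x b) + 2 * CC_coeff a a * x a)) = 0"
    by simp
  then have "(\<Sum>a\<in>UNIV. \<Sum>b\<in>UNIV. x a * x b * CC_coeff a b) + 2 * (\<Sum>a\<in>UNIV. CC_coeff a a * (x a)\<^sup>2) = 0"
    by (simp add: algebra_simps power2_eq_square sum.distrib sum_distrib_left)
  then have "(\<Sum>a\<in>UNIV. CC_coeff a a * (x a)\<^sup>2) = 0"
    using CC_coeff_nonneg_quadratic[of x] sum_nonneg[of UNIV "\<lambda>a. CC_coeff a a * (x a)\<^sup>2"]
      CC_coeff_pos by (simp add: less_imp_le)
  then have "CC_coeff a a * (x a)\<^sup>2 = 0" for a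
    using CC_coeff_pos by (simp add: sum_nonneg_eq_0_iff less_imp_le)
  then have diag: "coord N a a = 0" for a
    using CC_coeff_pos[of a a] unfolding x_def by (metis less_irrefl mult_eq_0_iff power_eq_0_iff)
  have off_diag: "coord N a b = 0" if "a \<noteq> b" for a b
    using zero_coord[of a b] that N_coord[of a b] CC_coeff_pos[of a b] by (simp add: coord_CC)
  show "coord N a b = coord 0 a b" for a b
    using diag off_diag by (cases "a = b") (simp_all add: coord_zero)
qed

end

lemma eigenframe_of_spd:
  assumes "spd B"
    and "\<forall>i j. e i \<bullet> e j = (if i = j then 1 else 0)"
    and "\<forall>i. \<exists>c::real. B *v e i = c *\<^sub>R e i"
  shows "\<exists>lam. eigenframe e B lam"
proof -
  obtain lam where eigen: "\<And>i. B *v e i = lam i *\<^sub>R e i"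
    using assms(3) by metis
  have "0 < lam i" for i
  proof -
    have "e i \<noteq> 0"
      using assms(2) by (metis inner_zero_left zero_neq_one)
    then have "0 < e i \<bullet> (B *v e i)"
      using assms(1) unfolding spd_def by blast
    then show ?thesis
      using assms(2) by (simp add: eigen)
  qed
  then have "eigenframe e B lam"
    using assms(2) by unfold_locales (simp_all add: eigen)
  then show ?thesis
    by blast
qed

theorem mainTheorem15:
  fixes B F G :: "real^3^3" and e :: "3 \<Rightarrow> real^3" and \<kappa> :: real
  assumes "spd B"
    and "\<forall>i j. e i \<bullet> e j = (if i = j then 1 else 0)"
    and "\<forall>i. \<exists>c::real. B *v e i = c *\<^sub>R e i"
  shows "(\<forall>N. symmetric_mat N \<longrightarrow> DD B \<bullet>\<bullet> (MM e \<bullet>\<bullet> N) = MM e \<bullet>\<bullet> (DD B \<bullet>\<bullet> N))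
    \<and> ((symmetric_mat F \<and> G = - (DD B \<bullet>\<bullet> F) \<and> 0 < \<kappa> \<and> \<kappa> \<le> 1) \<longrightarrow>
         G - (1 - \<kappa>) *\<^sub>R (MM e \<bullet>\<bullet> G) = - (DD B \<bullet>\<bullet> (F - (1 - \<kappa>) *\<^sub>R (MM e \<bullet>\<bullet> F))))"
proof -
  obtain lam where "eigenframe e B lam"
    using eigenframe_of_spd assms by blast
  then interpret eigenframe e B lam .
  obtain minor: "minor_sym (DD B)" and inverse: "\<And>M. symmetric_mat M \<Longrightarrow>
      CC B \<bullet>\<bullet> (DD B \<bullet>\<bullet> M) = M \<and> DD B \<bullet>\<bullet> (CC B \<bullet>\<bullet> M) = M"
    using DD_inverse[OF CC_injective] by blast
  have commute: "DD B \<bullet>\<bullet> (MM e \<bullet>\<bullet> N) = MM e \<bullet>\<bullet> (DD B \<bullet>\<bullet> N)" if "symmetric_mat N" for N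
    by (rule ddot_commute_with_inverse[OF minor inverse minor_sym_MM CC_MM_commute that])
  then show ?thesis
    by (auto simp: ddot_diff ddot_scaleR ddot_minus)
qed

end
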